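(* Let $X$ be a real Hilbert space, $f,g:X\to\mathbb{R}\cup\{+\infty\}$ proper $\Phi_{lsc}$-convex functions and $\alpha\in\mathbb{R}$. If there exist $\varphi_1\in\mathrm{supp}(f)$ and $\varphi_2\in\mathrm{supp}(g)$ with $\{x:\varphi_1(x)<\alpha\}\cap\{x:\varphi_2(x)<\alpha\}=\emptyset$, then for every $\varepsilon>0$ there exist $x_1\in\mathrm{dom}(f)$ and $x_2\in\mathrm{dom}(g)$ such that $f$ and $g$ satisfy $ZS(\varepsilon,x_1,x_2)$, i.e. $0\in\mathrm{co}\big(\partial^\varepsilon_{lsc}f(x_1)\cup\partial^\varepsilon_{lsc}g(x_2)\big)$.
   Context: $\Phi_{lsc}$ is the class of functions $\varphi(x)=-a\|x\|^2+\langle v,x\rangle+c$ ($a\ge0$, $v\in X^*$, $c\in\mathbb{R}$); $\mathrm{supp}(f)=\{\varphi\in\Phi_{lsc}:\varphi\le f\}$; $f$ is $\Phi_{lsc}$-convex if $f=\sup\mathrm{supp}(f)$ pointwise; proper means $\mathrm{supp}(f)\ne\emptyset$ and $\mathrm{dom}(f)\ne\emptyset$. For $\varepsilon\ge0$, $\partial^\varepsilon_{lsc}f(\bar x)$ is the set of $(a,v)\in\mathbb{R}_+\times X^*$ with $f(x)-f(\bar x)\ge\langle v,x-\bar x\rangle-a\|x\|^2+a\|\bar x\|^2-\varepsilon$ for all $x\in X$; convex hull $\mathrm{co}$ is taken in $\mathbb{R}\times X^*$ and $0$ means $(0,0)$. *)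

theory Defs
  imports "HOL-Analysis.Analysis"
begin

text \<open>Elementary functions of the class Phi_lsc. The Hilbert space X is identified with
its dual X* via the Riesz representation, so v ranges over X and the pairing is the inner product.\<close>

definition Phi_lsc :: "('a::real_inner \<Rightarrow> real) set" where
  "Phi_lsc = {\<phi>. \<exists>a v c. a \<ge> 0 \<and> \<phi> = (\<lambda>x. - a * (norm x)\<^sup>2 + inner v x + c)}"

definition supp :: "('a::real_inner \<Rightarrow> ereal) \<Rightarrow> ('a \<Rightarrow> real) set" where
  "supp f = {\<phi> \<in> Phi_lsc. \<forall>x. ereal (\<phi> x) \<le> f x}"

definition Phi_lsc_convex :: "('a::real_inner \<Rightarrow> ereal) \<Rightarrow> bool" where
  "Phi_lsc_convex f \<longleftrightarrow> (\<forall>x. f x = (SUP \<phi>\<in>supp f. ereal (\<phi> x)))"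

definition edom :: "('a \<Rightarrow> ereal) \<Rightarrow> 'a set" where
  "edom f = {x. f x < \<infinity>}"

definition proper_lsc :: "('a::real_inner \<Rightarrow> ereal) \<Rightarrow> bool" where
  "proper_lsc f \<longleftrightarrow> supp f \<noteq> {} \<and> edom f \<noteq> {}"

text \<open>epsilon-subdifferential; the inequality
  f x - f xbar \<ge> <v,x-xbar> - a|x|^2 + a|xbar|^2 - eps is written with f xbar moved to the right
  (equivalent when f xbar is finite, i.e. xbar in the domain).\<close>
definition subdiff_lsc :: "real \<Rightarrow> ('a::real_inner \<Rightarrow> ereal) \<Rightarrow> 'a \<Rightarrow> (real \<times> 'a) set" where
  "subdiff_lsc \<epsilon> f xbar = {(a, v). a \<ge> 0 \<and>
     (\<forall>x. f x \<ge> f xbar + ereal (inner v (x - xbar) - a * (norm x)\<^sup>2 + a * (norm xbar)\<^sup>2 - \<epsilon>))}"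

definition ZS :: "('a::real_inner \<Rightarrow> ereal) \<Rightarrow> ('a \<Rightarrow> ereal) \<Rightarrow> real \<Rightarrow> 'a \<Rightarrow> 'a \<Rightarrow> bool" where
  "ZS f g \<epsilon> x1 x2 \<longleftrightarrow> (0::real \<times> 'a) \<in> convex hull (subdiff_lsc \<epsilon> f x1 \<union> subdiff_lsc \<epsilon> g x2)"

end

theory Submission
  imports Defs "HOL-Real_Asymp.Real_Asymp"
begin

text \<open>If one minorant, say \<open>\<phi>1\<close>, is \<open>\<ge> \<alpha>\<close> everywhere, then \<open>f \<ge> \<alpha>\<close> and an \<open>\<epsilon>\<close>-minimiser of \<open>f\<close>
  has \<open>0\<close> in its \<open>\<epsilon>\<close>-subdifferential. Otherwise both strict sublevel sets are nonempty. A
  concave quadratic with \<open>a > 0\<close> tends to \<open>-\<infinity>\<close> along every ray, while the other minorant does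
  not increase along a suitable ray starting in its sublevel set; so disjointness forces both
  minorants to be affine, \<open>\<langle>v\<^sub>i,x\<rangle> + c\<^sub>i\<close>. Disjoint open half-spaces have antiparallel normals,
  \<open>\<parallel>v\<^sub>2\<parallel> v\<^sub>1 + \<parallel>v\<^sub>1\<parallel> v\<^sub>2 = 0\<close>. Finally \<open>\<epsilon>\<close>-minimisers of \<open>f - \<langle>v\<^sub>1,\<cdot>\<rangle>\<close> and \<open>g - \<langle>v\<^sub>2,\<cdot>\<rangle>\<close>
  have \<open>(0,v\<^sub>1)\<close> and \<open>(0,v\<^sub>2)\<close> as \<open>\<epsilon>\<close>-subgradients, and the corresponding convex combination of
  the two is \<open>0\<close>.\<close>

definition phi_lsc :: "real \<Rightarrow> 'a::real_inner \<Rightarrow> real \<Rightarrow> 'a \<Rightarrow> real" where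
  "phi_lsc a v c x = - a * (norm x)\<^sup>2 + inner v x + c"

lemma Phi_lscE:
  assumes "\<phi> \<in> Phi_lsc"
  obtains a v c where "a \<ge> 0" "\<phi> = phi_lsc a v c"
  using assms unfolding Phi_lsc_def phi_lsc_def by blast

lemma phi_lsc_along_line:
  "phi_lsc a v c (y + t *\<^sub>R d)
     = phi_lsc a v c y + t * inner (v - (2 * a) *\<^sub>R y) d - a * (norm d)\<^sup>2 * t\<^sup>2"
  unfolding phi_lsc_def power2_norm_eq_inner
  by (simp add: inner_add_left inner_add_right inner_diff_left inner_commute algebra_simps
      power2_eq_square)

lemma phi_lsc_nonincreasing_on_ray:
  assumes "a \<ge> 0" "t \<ge> 0" "inner (v - (2 * a) *\<^sub>R y) d \<le> 0"
  shows "phi_lsc a v c (y + t *\<^sub>R d) \<le> phi_lsc a v c y"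
proof -
  have "t * inner (v - (2 * a) *\<^sub>R y) d \<le> 0"
    using assms by (simp add: mult_nonneg_nonpos)
  moreover have "a * (norm d)\<^sup>2 * t\<^sup>2 \<ge> 0" using assms by simp
  ultimately show ?thesis unfolding phi_lsc_along_line by linarith
qed

lemma phi_lsc_eventually_below_on_ray:
  assumes "a > 0" "d \<noteq> 0"
  shows "eventually (\<lambda>t. phi_lsc a v c (y + t *\<^sub>R d) < \<alpha>) at_top"
proof -
  have "a * (norm d)\<^sup>2 > 0" using assms by simp
  then show ?thesis unfolding phi_lsc_along_line by real_asymp
qed

lemma disjoint_sublevels_not_eventually_both_below:
  fixes F G :: "'a \<Rightarrow> real" and p :: "real \<Rightarrow> 'a"
  assumes "\<forall>x. \<alpha> \<le> F x \<or> \<alpha> \<le> G x"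
    and "eventually (\<lambda>t. F (p t) < \<alpha>) at_top" "eventually (\<lambda>t. G (p t) < \<alpha>) at_top"
  shows False
proof -
  from assms(2,3) have "eventually (\<lambda>t. F (p t) < \<alpha> \<and> G (p t) < \<alpha>) at_top"
    by (rule eventually_conj)
  then obtain t where "F (p t) < \<alpha>" "G (p t) < \<alpha>"
    using eventually_happens'[OF trivial_limit_at_top_linorder] by blast
  with assms(1) show False by (meson not_le)
qed

lemma disjoint_sublevels_imp_affine:
  assumes "a\<^sub>1 \<ge> 0" "a\<^sub>2 \<ge> 0"
    and below1: "phi_lsc a\<^sub>1 v\<^sub>1 c\<^sub>1 y\<^sub>1 < \<alpha>" and below2: "phi_lsc a\<^sub>2 v\<^sub>2 c\<^sub>2 y\<^sub>2 < \<alpha>"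
    and disj: "\<forall>x. \<alpha> \<le> phi_lsc a\<^sub>1 v\<^sub>1 c\<^sub>1 x \<or> \<alpha> \<le> phi_lsc a\<^sub>2 v\<^sub>2 c\<^sub>2 x"
  shows "a\<^sub>1 = 0"
proof (rule ccontr)
  assume "a\<^sub>1 \<noteq> 0"
  with assms(1) have "a\<^sub>1 > 0" by simp
  define u where "u = v\<^sub>2 - (2 * a\<^sub>2) *\<^sub>R y\<^sub>2"
  \<comment> \<open>\<open>u\<close> is the gradient of \<open>phi_lsc a\<^sub>2 v\<^sub>2 c\<^sub>2\<close> at \<open>y\<^sub>2\<close>; if it vanishes, any nonzero direction will do\<close>
  define d where "d = (if u = 0 then y\<^sub>2 - y\<^sub>1 else - u)"
  have "y\<^sub>1 \<noteq> y\<^sub>2" using below1 below2 disj by (metis not_le)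
  then have "d \<noteq> 0" unfolding d_def by auto
  have "inner u d \<le> 0" unfolding d_def by auto
  then have "phi_lsc a\<^sub>2 v\<^sub>2 c\<^sub>2 (y\<^sub>2 + t *\<^sub>R d) < \<alpha>" if "t \<ge> 0" for t
    using le_less_trans[OF phi_lsc_nonincreasing_on_ray[OF assms(2) that] below2]
    unfolding u_def by blast
  then have "eventually (\<lambda>t. phi_lsc a\<^sub>2 v\<^sub>2 c\<^sub>2 (y\<^sub>2 + t *\<^sub>R d) < \<alpha>) at_top"
    by (rule eventually_at_top_linorderI)
  with disj phi_lsc_eventually_below_on_ray[OF \<open>a\<^sub>1 > 0\<close> \<open>d \<noteq> 0\<close>]
  show False by (rule disjoint_sublevels_not_eventually_both_below)
qed

lemma affine_minorants_of_disjoint_sublevels: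
  assumes "\<phi>\<^sub>1 \<in> Phi_lsc" "\<phi>\<^sub>2 \<in> Phi_lsc" "\<phi>\<^sub>1 y\<^sub>1 < \<alpha>" "\<phi>\<^sub>2 y\<^sub>2 < \<alpha>"
    and disj: "\<forall>x. \<alpha> \<le> \<phi>\<^sub>1 x \<or> \<alpha> \<le> \<phi>\<^sub>2 x"
  obtains v\<^sub>1 c\<^sub>1 v\<^sub>2 c\<^sub>2 where "\<phi>\<^sub>1 = (\<lambda>x. inner v\<^sub>1 x + c\<^sub>1)" "\<phi>\<^sub>2 = (\<lambda>x. inner v\<^sub>2 x + c\<^sub>2)"
proof -
  obtain a\<^sub>1 v\<^sub>1 c\<^sub>1 a\<^sub>2 v\<^sub>2 c\<^sub>2 where a: "a\<^sub>1 \<ge> 0" "a\<^sub>2 \<ge> 0"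
    and \<phi>: "\<phi>\<^sub>1 = phi_lsc a\<^sub>1 v\<^sub>1 c\<^sub>1" "\<phi>\<^sub>2 = phi_lsc a\<^sub>2 v\<^sub>2 c\<^sub>2"
    using assms(1,2) by (metis Phi_lscE)
  have "a\<^sub>1 = 0" "a\<^sub>2 = 0"
    using disjoint_sublevels_imp_affine[OF a] disjoint_sublevels_imp_affine[OF a(2,1)]
      assms(3,4) disj
    unfolding \<phi> by meson+
  then show thesis using that \<phi> unfolding phi_lsc_def by auto
qed

lemma affine_eventually_below_on_ray:
  assumes "inner v w > 0"
  shows "eventually (\<lambda>t. inner v ((- t) *\<^sub>R w) + c < \<alpha>) at_top"
  using assms by simp real_asymp

lemma disjoint_half_spaces_antiparallel:
  fixes v\<^sub>1 v\<^sub>2 :: "'a::real_inner"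
  assumes disj: "\<forall>x. \<alpha> \<le> inner v\<^sub>1 x + c\<^sub>1 \<or> \<alpha> \<le> inner v\<^sub>2 x + c\<^sub>2"
  shows "norm v\<^sub>2 *\<^sub>R v\<^sub>1 + norm v\<^sub>1 *\<^sub>R v\<^sub>2 = 0"
proof (rule ccontr)
  define w where "w = norm v\<^sub>2 *\<^sub>R v\<^sub>1 + norm v\<^sub>1 *\<^sub>R v\<^sub>2"
  define q where "q = norm v\<^sub>1 * norm v\<^sub>2 + inner v\<^sub>1 v\<^sub>2"
  assume "norm v\<^sub>2 *\<^sub>R v\<^sub>1 + norm v\<^sub>1 *\<^sub>R v\<^sub>2 \<noteq> 0"
  then have "w \<noteq> 0" "v\<^sub>1 \<noteq> 0" "v\<^sub>2 \<noteq> 0" unfolding w_def by auto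
  have v1w: "inner v\<^sub>1 w = norm v\<^sub>1 * q" and v2w: "inner v\<^sub>2 w = norm v\<^sub>2 * q"
    unfolding w_def q_def
    by (simp_all add: inner_add_right inner_commute dot_square_norm power2_eq_square algebra_simps)
  have "inner w w = inner (norm v\<^sub>2 *\<^sub>R v\<^sub>1 + norm v\<^sub>1 *\<^sub>R v\<^sub>2) w"
    by (simp only: w_def)
  also have "\<dots> = 2 * (norm v\<^sub>1 * norm v\<^sub>2) * q"
    by (simp add: inner_add_left v1w v2w)
  finally have "0 < 2 * (norm v\<^sub>1 * norm v\<^sub>2) * q"
    using \<open>w \<noteq> 0\<close> by (metis inner_gt_zero_iff)
  then have "q > 0"
    using mult_nonneg_nonneg[OF norm_ge_zero norm_ge_zero, of v\<^sub>1 v\<^sub>2]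
    by (auto simp: zero_less_mult_iff)
  with \<open>v\<^sub>1 \<noteq> 0\<close> \<open>v\<^sub>2 \<noteq> 0\<close> have "inner v\<^sub>1 w > 0" "inner v\<^sub>2 w > 0"
    by (simp_all add: v1w v2w)
  from disj this[THEN affine_eventually_below_on_ray]
  show False by (rule disjoint_sublevels_not_eventually_both_below)
qed

lemma affine_minorant_subgradient:
  fixes f :: "'a::real_inner \<Rightarrow> ereal"
  assumes ne: "\<forall>x. f x \<noteq> -\<infinity>" and dom: "edom f \<noteq> {}"
    and minorant: "\<forall>x. ereal (inner v x + c) \<le> f x" and "\<epsilon> > 0"
  obtains x\<^sub>1 where "x\<^sub>1 \<in> edom f" "(0, v) \<in> subdiff_lsc \<epsilon> f x\<^sub>1"
proof -
  define r where "r x = real_of_ereal (f x) - inner v x" for x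
  have f_eq: "f x = ereal (r x + inner v x)" if "x \<in> edom f" for x
    using that ne unfolding edom_def r_def by (cases "f x") auto
  have "c \<le> r x" if "x \<in> edom f" for x
    using minorant f_eq[OF that] by (metis add.commute add_le_cancel_left ereal_less_eq(3))
  then have bdd: "bdd_below (r ` edom f)" by (meson bdd_belowI2)
  obtain x\<^sub>1 where x\<^sub>1: "x\<^sub>1 \<in> edom f" "r x\<^sub>1 < Inf (r ` edom f) + \<epsilon>"
    using cInf_lessD[of "r ` edom f"] dom \<open>\<epsilon> > 0\<close> by force
  have "f x\<^sub>1 + ereal (inner v (x - x\<^sub>1) - \<epsilon>) \<le> f x" for x
  proof (cases "x \<in> edom f")
    case True
    then have "r x\<^sub>1 < r x + \<epsilon>"
      using x\<^sub>1(2) cInf_lower[OF imageI bdd] by fastforce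
    then show ?thesis
      using f_eq[OF True] f_eq[OF x\<^sub>1(1)] by (simp add: inner_diff_right)
  next
    case False
    then show ?thesis unfolding edom_def by simp
  qed
  with x\<^sub>1(1) show thesis by (intro that) (auto simp: subdiff_lsc_def)
qed

lemma ZS_of_antiparallel_subgradients:
  assumes "(0, v\<^sub>1) \<in> subdiff_lsc \<epsilon> f x\<^sub>1" "(0, v\<^sub>2) \<in> subdiff_lsc \<epsilon> g x\<^sub>2"
    and "u \<ge> 0" "s \<ge> 0" "u + s > 0" "u *\<^sub>R v\<^sub>1 + s *\<^sub>R v\<^sub>2 = 0"
  shows "ZS f g \<epsilon> x\<^sub>1 x\<^sub>2"
proof -
  have "(u / (u + s)) *\<^sub>R v\<^sub>1 + (s / (u + s)) *\<^sub>R v\<^sub>2 = (1 / (u + s)) *\<^sub>R (u *\<^sub>R v\<^sub>1 + s *\<^sub>R v\<^sub>2)"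
    by (simp add: scaleR_add_right)
  then have "0 = (u / (u + s)) *\<^sub>R (0::real, v\<^sub>1) + (s / (u + s)) *\<^sub>R (0, v\<^sub>2)"
    using assms(6) by (simp add: zero_prod_def)
  also have "\<dots> \<in> convex hull (subdiff_lsc \<epsilon> f x\<^sub>1 \<union> subdiff_lsc \<epsilon> g x\<^sub>2)"
    using assms
    by (intro convexD[OF convex_convex_hull] hull_inc) (auto simp: add_divide_distrib[symmetric])
  finally show ?thesis unfolding ZS_def .
qed

lemma ZS_of_zero_subgradient:
  assumes "(0, 0) \<in> subdiff_lsc \<epsilon> f x\<^sub>1 \<union> subdiff_lsc \<epsilon> g x\<^sub>2"
  shows "ZS f g \<epsilon> x\<^sub>1 x\<^sub>2"
  unfolding ZS_def zero_prod_def using assms by (rule hull_inc)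

lemma ZS_commute: "ZS f g \<epsilon> x\<^sub>1 x\<^sub>2 \<longleftrightarrow> ZS g f \<epsilon> x\<^sub>2 x\<^sub>1"
  unfolding ZS_def by (simp add: Un_commute)

lemma ZS_of_constant_minorant:
  assumes "\<forall>x. f x \<noteq> -\<infinity>" "\<forall>x. ereal \<alpha> \<le> f x" "edom f \<noteq> {}" "edom g \<noteq> {}" "\<epsilon> > 0"
  shows "\<exists>x\<^sub>1\<in>edom f. \<exists>x\<^sub>2\<in>edom g. ZS f g \<epsilon> x\<^sub>1 x\<^sub>2"
proof -
  obtain x\<^sub>1 where "x\<^sub>1 \<in> edom f" "(0, 0) \<in> subdiff_lsc \<epsilon> f x\<^sub>1"
    using affine_minorant_subgradient[of f 0 \<alpha>] assms by auto
  with \<open>edom g \<noteq> {}\<close> show ?thesis by (metis UnI1 ZS_of_zero_subgradient ex_in_conv)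
qed

lemma ZS_of_disjoint_affine_minorants:
  assumes "\<forall>x. f x \<noteq> -\<infinity>" "\<forall>x. g x \<noteq> -\<infinity>" "edom f \<noteq> {}" "edom g \<noteq> {}" "\<epsilon> > 0"
    and "\<forall>x. ereal (inner v\<^sub>1 x + c\<^sub>1) \<le> f x" "\<forall>x. ereal (inner v\<^sub>2 x + c\<^sub>2) \<le> g x"
    and disj: "\<forall>x. \<alpha> \<le> inner v\<^sub>1 x + c\<^sub>1 \<or> \<alpha> \<le> inner v\<^sub>2 x + c\<^sub>2"
  shows "\<exists>x\<^sub>1\<in>edom f. \<exists>x\<^sub>2\<in>edom g. ZS f g \<epsilon> x\<^sub>1 x\<^sub>2"
proof -
  obtain x\<^sub>1 where x\<^sub>1: "x\<^sub>1 \<in> edom f" "(0, v\<^sub>1) \<in> subdiff_lsc \<epsilon> f x\<^sub>1"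
    using affine_minorant_subgradient[of f v\<^sub>1 c\<^sub>1] assms by auto
  obtain x\<^sub>2 where x\<^sub>2: "x\<^sub>2 \<in> edom g" "(0, v\<^sub>2) \<in> subdiff_lsc \<epsilon> g x\<^sub>2"
    using affine_minorant_subgradient[of g v\<^sub>2 c\<^sub>2] assms by auto
  have "ZS f g \<epsilon> x\<^sub>1 x\<^sub>2"
  proof (cases "v\<^sub>1 = 0")
    case True
    with x\<^sub>1 show ?thesis by (simp add: ZS_of_zero_subgradient)
  next
    case False
    with x\<^sub>1 x\<^sub>2 disjoint_half_spaces_antiparallel[OF disj] show ?thesis
      by (intro ZS_of_antiparallel_subgradients) (auto simp: add_nonneg_pos)
  qed
  with x\<^sub>1 x\<^sub>2 show ?thesis by blast
qed

theorem mainTheorem12: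
  fixes f g :: "'a::{real_inner, complete_space} \<Rightarrow> ereal" and \<alpha> :: real
  assumes f_ne: "\<forall>x. f x \<noteq> -\<infinity>" and g_ne: "\<forall>x. g x \<noteq> -\<infinity>"
    and f_prop: "proper_lsc f" and g_prop: "proper_lsc g"
    and f_conv: "Phi_lsc_convex f" and g_conv: "Phi_lsc_convex g"
    and \<phi>1: "\<phi>1 \<in> supp f" and \<phi>2: "\<phi>2 \<in> supp g"
    and sep: "{x. \<phi>1 x < \<alpha>} \<inter> {x. \<phi>2 x < \<alpha>} = {}"
  shows "\<forall>\<epsilon>>0. \<exists>x1\<in>edom f. \<exists>x2\<in>edom g. ZS f g \<epsilon> x1 x2"
proof (intro allI impI)
  fix \<epsilon> :: real
  assume "\<epsilon> > 0"
  have f_min: "\<forall>x. ereal (\<phi>1 x) \<le> f x" and g_min: "\<forall>x. ereal (\<phi>2 x) \<le> g x"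
    and "\<phi>1 \<in> Phi_lsc" "\<phi>2 \<in> Phi_lsc"
    using \<phi>1 \<phi>2 unfolding supp_def by auto
  have f_dom: "edom f \<noteq> {}" and g_dom: "edom g \<noteq> {}"
    using f_prop g_prop unfolding proper_lsc_def by auto
  have disj: "\<forall>x. \<alpha> \<le> \<phi>1 x \<or> \<alpha> \<le> \<phi>2 x" using sep by (auto simp: not_le)
  consider "\<forall>x. \<alpha> \<le> \<phi>1 x" | "\<forall>x. \<alpha> \<le> \<phi>2 x" | y\<^sub>1 y\<^sub>2 where "\<phi>1 y\<^sub>1 < \<alpha>" "\<phi>2 y\<^sub>2 < \<alpha>"
    by (meson not_le)
  then show "\<exists>x1\<in>edom f. \<exists>x2\<in>edom g. ZS f g \<epsilon> x1 x2"
  proof cases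
    case 1
    with f_min have "\<forall>x. ereal \<alpha> \<le> f x" by (meson ereal_less_eq(3) order_trans)
    then show ?thesis by (rule ZS_of_constant_minorant[OF f_ne _ f_dom g_dom \<open>\<epsilon> > 0\<close>])
  next
    case 2
    with g_min have "\<forall>x. ereal \<alpha> \<le> g x" by (meson ereal_less_eq(3) order_trans)
    then show ?thesis
      using ZS_of_constant_minorant[OF g_ne _ g_dom f_dom \<open>\<epsilon> > 0\<close>] by (metis ZS_commute)
  next
    case 3
    from \<open>\<phi>1 \<in> Phi_lsc\<close> \<open>\<phi>2 \<in> Phi_lsc\<close> 3 disj
    obtain v\<^sub>1 c\<^sub>1 v\<^sub>2 c\<^sub>2 where "\<phi>1 = (\<lambda>x. inner v\<^sub>1 x + c\<^sub>1)" "\<phi>2 = (\<lambda>x. inner v\<^sub>2 x + c\<^sub>2)"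
      by (rule affine_minorants_of_disjoint_sublevels)
    with f_ne g_ne f_dom g_dom \<open>\<epsilon> > 0\<close> f_min g_min disj show ?thesis
      by (intro ZS_of_disjoint_affine_minorants) auto
  qed
qed

end
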